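(* Let $k\geq2$ and let $W\subseteq\mathbb{Z}_{3k}$, $\overline W=\mathbb{Z}_{3k}\setminus W$, satisfy: for every $i\in\mathbb{Z}_{3k}$, $|x^i\cap W|\geq2$ and $|C^i\cap\overline W|\geq2$; and for every $i\in\overline W$, $[i+2k,i+2k+\omega(i)]_{3k}\subseteq W$. Then there exists $i\in\overline W$ with $p^i\equiv1\pmod3$.
   Context: $\mathbb{Z}_{3k}=\{0,\dots,3k-1\}$ with addition modulo $3k$; $[a,b]_{3k}$ is the cyclic closed interval from $a$ to $b$. $C^i=\{i,\dots,i+k-1\}$ (mod $3k$), $x^i=\{i,i+k,i+2k\}$. For $i\in\overline W$, $\omega(i)=\min\{t\ge0:i+k+t\in\overline W\}$. For $i\in\overline W$ the sequence $(r^i_t)_{t\ge0}$ is defined by $r^i_0=i$, $r^i_t=r^i_{t-1}+k+\omega(r^i_{t-1})$ for $t\ge1$, and $p^i=\max\{t\ge0:\sum_{j=0}^{t-1}\omega(r^i_j)\le k-1\}$. *)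

theory Defs
  imports Main
begin

text \<open>Z_{3k} is modelled as the naturals {0..<3k} with arithmetic mod 3k.
  W is a subset of {0..<3k}; Wbar is its complement in {0..<3k}.\<close>

definition Wbar :: "nat \<Rightarrow> nat set \<Rightarrow> nat set" where
  "Wbar k W = {..<3*k} - W"

definition Cblk :: "nat \<Rightarrow> nat \<Rightarrow> nat set" where
  "Cblk k i = {(i + j) mod (3*k) | j. j < k}"

definition xset :: "nat \<Rightarrow> nat \<Rightarrow> nat set" where
  "xset k i = {i mod (3*k), (i + k) mod (3*k), (i + 2*k) mod (3*k)}"

text \<open>cyclic closed interval [a,b]_n from a to b\<close>
definition cint :: "nat \<Rightarrow> nat \<Rightarrow> nat \<Rightarrow> nat set" where
  "cint n a b = {(a + j) mod n | j. j \<le> (b mod n + n - a mod n) mod n}"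

definition omega :: "nat \<Rightarrow> nat set \<Rightarrow> nat \<Rightarrow> nat" where
  "omega k W i = (LEAST t. (i + k + t) mod (3*k) \<in> Wbar k W)"

fun rseq :: "nat \<Rightarrow> nat set \<Rightarrow> nat \<Rightarrow> nat \<Rightarrow> nat" where
  "rseq k W i 0 = i"
| "rseq k W i (Suc t) = (rseq k W i t + k + omega k W (rseq k W i t)) mod (3*k)"

definition pidx :: "nat \<Rightarrow> nat set \<Rightarrow> nat \<Rightarrow> nat" where
  "pidx k W i = (GREATEST t. (\<Sum>j<t. omega k W (rseq k W i j)) \<le> k - 1)"

end

theory Submission
  imports Defs
begin

text \<open>Lift \<open>\<overline>W\<close> to a \<open>3k\<close>-periodic subset of \<open>\<int>\<close>. Because every \<open>x\<^sup>i\<close> meets \<open>W\<close> twice, no two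
  of its points are \<open>k\<close> apart. Start the walk at \<open>b = r\<^sup>a\<^sub>1\<close> and unwrap it: \<open>r\<^sup>b\<^sub>t\<close> sits at
  \<open>b + tk + S\<^sub>t\<close>, where \<open>S\<^sub>t\<close> is the sum of the first \<open>t\<close> values of \<open>\<omega>\<close>. The sums \<open>S\<^sub>t\<close> never jump
  over \<open>k\<close>: at an overshoot, \<open>b\<close> or (when \<open>t \<equiv> 2 mod 3\<close>) its predecessor \<open>a\<close>, shifted by a multiple
  of \<open>3k\<close>, would land in a stretch that the minimality of \<open>\<omega>\<close> or the hypothesis on
  \<open>[i+2k, i+2k+\<omega>(i)]\<close> keeps outside \<open>\<overline>W\<close>. Hence \<open>S\<^sub>T = k\<close> for some \<open>T\<close>; the walk is then at
  \<open>b + (T+1)k\<close>, which lies in \<open>\<overline>W\<close> only if \<open>T \<equiv> 2 (mod 3)\<close>, so \<open>p\<^sup>b = T - 1 \<equiv> 1\<close>.\<close>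

lemma cint_add_mem:
  fixes n a j w :: nat
  assumes "w < n" and "j \<le> w"
  shows "(a + j) mod n \<in> cint n a (a + w)"
proof -
  define r where "r = a mod n"
  have r_less: "r < n" using assms(1) r_def by simp
  have aw_mod: "(a + w) mod n = (r + w) mod n" unfolding r_def by (simp add: mod_add_left_eq)
  have "((a + w) mod n + n - a mod n) mod n = w"
  proof (cases "r + w < n")
    case True
    then show ?thesis using aw_mod r_def assms(1) by simp
  next
    case False
    then have "(r + w) mod n = r + w - n" using r_less assms(1) by (simp add: le_mod_geq)
    then show ?thesis using aw_mod r_def False assms(1) by simp
  qed
  then show ?thesis unfolding cint_def using assms(2) by auto
qed

lemma nat_seq_no_jump_hits:
  fixes f :: "nat \<Rightarrow> nat"
  assumes "f 0 \<le> m" and no_jump: "\<And>t. f t < m \<Longrightarrow> f (Suc t) \<le> m" and "m \<le> f n"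
  shows "\<exists>t. f t = m"
  using assms(3)
proof (induction n)
  case 0
  then show ?case using assms(1) by auto
next
  case (Suc n)
  show ?case
  proof (cases "m \<le> f n")
    case True
    then show ?thesis by (rule Suc.IH)
  next
    case False
    then show ?thesis using no_jump[of n] Suc.prems by auto
  qed
qed

lemma Wbar_less: "i \<in> Wbar k W \<Longrightarrow> i < 3*k"
  by (simp add: Wbar_def)

lemma omega_exists: "i \<in> Wbar k W \<Longrightarrow> (i + k + 2*k) mod (3*k) \<in> Wbar k W"
  using Wbar_less[of i] by (simp add: add.assoc)

lemma omega_le: "i \<in> Wbar k W \<Longrightarrow> omega k W i \<le> 2*k"
  unfolding omega_def by (rule Least_le) (rule omega_exists)

locale admissible =
  fixes k :: nat and W :: "nat set"
  assumes k_pos: "0 < k"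
    and xset_W: "\<forall>i<3*k. card (xset k i \<inter> W) \<ge> 2"
    and cint_W: "\<forall>i\<in>Wbar k W. cint (3*k) (i + 2*k) (i + 2*k + omega k W i) \<subseteq> W"
begin

definition inWbar :: "int \<Rightarrow> bool" where
  "inWbar z \<longleftrightarrow> nat (z mod (3 * int k)) \<in> Wbar k W"

lemma inWbar_add_cong:
  "x mod (3 * int k) = y mod (3 * int k) \<Longrightarrow> inWbar (x + u) = inWbar (y + u)"
  unfolding inWbar_def by (metis mod_add_left_eq)

lemma inWbar_add_period [simp]: "inWbar (z + m * (3 * int k)) = inWbar z"
  unfolding inWbar_def by simp

lemma inWbar_of_nat_iff: "inWbar (int i) \<longleftrightarrow> i mod (3*k) \<in> Wbar k W"
proof -
  have "int i mod (3 * int k) = int (i mod (3*k))" by (simp add: of_nat_mod)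
  then show ?thesis unfolding inWbar_def by simp
qed

lemma inWbar_of_nat: "i \<in> Wbar k W \<Longrightarrow> inWbar (int i)"
  using inWbar_of_nat_iff Wbar_less by simp

lemma inWbar_not_add_k:
  assumes "inWbar z"
  shows "\<not> inWbar (z + int k)"
proof
  assume "inWbar (z + int k)"
  define i where "i = nat (z mod (3 * int k))"
  have i_Wbar: "i \<in> Wbar k W" using assms unfolding inWbar_def i_def by simp
  have i_less: "i < 3*k" using Wbar_less i_Wbar by simp
  have "z mod (3 * int k) = int i" unfolding i_def using k_pos by simp
  then have "inWbar (int i + int k)"
    using \<open>inWbar (z + int k)\<close> inWbar_add_cong[of z "int i" "int k"] i_less by simp
  then have "(i + k) mod (3*k) \<notin> W"
    using inWbar_of_nat_iff[of "i + k"] by (simp add: Wbar_def)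
  moreover have "i mod (3*k) \<notin> W" using i_Wbar i_less by (simp add: Wbar_def)
  ultimately have "xset k i \<inter> W \<subseteq> {(i + 2*k) mod (3*k)}"
    unfolding xset_def by auto
  then have "card (xset k i \<inter> W) \<le> 1"
    using card_mono[of "{(i + 2*k) mod (3*k)}"] by fastforce
  then show False using xset_W i_less by fastforce
qed

lemma inWbar_not_diff_k: "inWbar z \<Longrightarrow> \<not> inWbar (z - int k)"
  using inWbar_not_add_k[of "z - int k"] by auto

text \<open>The facts about \<open>\<omega>(i)\<close> below hold at every integer \<open>z \<equiv> i (mod 3k)\<close>, so that they
  apply along the unwrapped walk.\<close>

lemma inWbar_omega:
  assumes "i \<in> Wbar k W" and "int i mod (3 * int k) = z mod (3 * int k)"
  shows "inWbar (z + int k + int (omega k W i))"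
proof -
  have "(i + k + omega k W i) mod (3*k) \<in> Wbar k W"
    unfolding omega_def by (rule LeastI, rule omega_exists[OF assms(1)])
  then have "inWbar (int i + (int k + int (omega k W i)))"
    using inWbar_of_nat_iff[of "i + k + omega k W i"] by (simp add: add.assoc)
  then show ?thesis using inWbar_add_cong[OF assms(2)] by (simp add: add.assoc)
qed

lemma not_inWbar_below_omega:
  assumes "i \<in> Wbar k W" and "int i mod (3 * int k) = z mod (3 * int k)"
    and "j < omega k W i"
  shows "\<not> inWbar (z + int k + int j)"
proof -
  have "(i + k + j) mod (3*k) \<notin> Wbar k W"
    using assms(3) unfolding omega_def by (rule not_less_Least)
  then have "\<not> inWbar (int i + (int k + int j))"
    using inWbar_of_nat_iff[of "i + k + j"] by (simp add: add.assoc)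
  then show ?thesis using inWbar_add_cong[OF assms(2)] by (simp add: add.assoc)
qed

lemma not_inWbar_window:
  assumes "i \<in> Wbar k W" and "int i mod (3 * int k) = z mod (3 * int k)"
    and "j \<le> omega k W i"
  shows "\<not> inWbar (z + 2 * int k + int j)"
proof -
  have "omega k W i < 3*k" using omega_le[OF assms(1)] k_pos by simp
  then have "(i + 2*k + j) mod (3*k) \<in> cint (3*k) (i + 2*k) (i + 2*k + omega k W i)"
    using cint_add_mem assms(3) by blast
  then have "(i + 2*k + j) mod (3*k) \<notin> Wbar k W" using cint_W assms(1) by (auto simp: Wbar_def)
  then have "\<not> inWbar (int i + (2 * int k + int j))"
    using inWbar_of_nat_iff[of "i + 2 * k + j"] by (simp add: add.assoc)
  then show ?thesis using inWbar_add_cong[OF assms(2)] by (simp add: add.assoc)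
qed

lemma omega_pos:
  assumes "i \<in> Wbar k W"
  shows "1 \<le> omega k W i"
proof (rule ccontr)
  assume "\<not> 1 \<le> omega k W i"
  then have "omega k W i = 0" by simp
  then have "inWbar (int i + int k)" using inWbar_omega[OF assms refl] by simp
  then show False using inWbar_not_add_k inWbar_of_nat[OF assms] by blast
qed

definition omega_sum :: "nat \<Rightarrow> nat \<Rightarrow> nat" where
  "omega_sum i t = (\<Sum>j<t. omega k W (rseq k W i j))"

definition walk :: "nat \<Rightarrow> nat \<Rightarrow> int" where
  "walk i t = int i + int t * int k + int (omega_sum i t)"

lemma omega_sum_Suc: "omega_sum i (Suc t) = omega_sum i t + omega k W (rseq k W i t)"
  unfolding omega_sum_def by simp

lemma rseq_walk:
  assumes "i \<in> Wbar k W"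
  shows "rseq k W i t \<in> Wbar k W \<and> int (rseq k W i t) mod (3 * int k) = walk i t mod (3 * int k)"
proof (induction t)
  case 0
  then show ?case using assms by (simp add: walk_def omega_sum_def)
next
  case (Suc t)
  define r where "r = rseq k W i t"
  have r_Wbar: "r \<in> Wbar k W" and r_mod: "int r mod (3 * int k) = walk i t mod (3 * int k)"
    using Suc r_def by auto
  have next_eq: "rseq k W i (Suc t) = (r + k + omega k W r) mod (3*k)" using r_def by simp
  have "inWbar (int r + int k + int (omega k W r))" using inWbar_omega[OF r_Wbar refl] .
  then have next_Wbar: "rseq k W i (Suc t) \<in> Wbar k W"
    using next_eq inWbar_of_nat_iff[of "r + k + omega k W r"] by simp
  have "int (rseq k W i (Suc t)) mod (3 * int k)
      = (int r + (int k + int (omega k W r))) mod (3 * int k)"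
    using next_eq by (simp add: of_nat_mod add.assoc)
  also have "\<dots> = (walk i t + (int k + int (omega k W r))) mod (3 * int k)"
    using r_mod by (metis mod_add_left_eq)
  also have "walk i t + (int k + int (omega k W r)) = walk i (Suc t)"
    unfolding walk_def omega_sum_Suc r_def by (simp add: algebra_simps)
  finally show ?case using next_Wbar by simp
qed

lemma inWbar_walk: "i \<in> Wbar k W \<Longrightarrow> inWbar (walk i t)"
  using rseq_walk inWbar_add_cong[of _ _ 0] inWbar_of_nat by (metis add_0_right)

lemma omega_sum_less_Suc: "i \<in> Wbar k W \<Longrightarrow> omega_sum i t < omega_sum i (Suc t)"
  using omega_pos rseq_walk by (simp add: omega_sum_Suc Suc_le_eq)

lemma omega_sum_ge: "i \<in> Wbar k W \<Longrightarrow> t \<le> omega_sum i t"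
proof (induction t)
  case (Suc t)
  then show ?case using omega_sum_less_Suc[of i t] by simp
qed simp

lemma omega_sum_no_overshoot_mod3_not2:
  assumes b: "b \<in> Wbar k W" and below: "omega_sum b t < k" and t: "t mod 3 \<noteq> 2"
  shows "omega_sum b (Suc t) \<le> k"
proof (rule ccontr)
  define w where "w = omega k W (rseq k W b t)"
  define d where "d = k - omega_sum b t"
  assume "\<not> omega_sum b (Suc t) \<le> k"
  then have "d < w" using below unfolding d_def w_def omega_sum_Suc by simp
  have d_int: "int d = int k - int (omega_sum b t)" using below d_def by simp
  have r: "rseq k W b t \<in> Wbar k W"
    "int (rseq k W b t) mod (3 * int k) = walk b t mod (3 * int k)"
    using rseq_walk[OF b] by auto
  have "int t = 3 * int (t div 3) \<or> int t = 3 * int (t div 3) + 1" using t by presburger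
  then show False
  proof
    assume "int t = 3 * int (t div 3)"
    then have "walk b t + 2 * int k + int d = int b + int (t div 3 + 1) * (3 * int k)"
      by (simp add: walk_def d_int algebra_simps)
    then have "inWbar (walk b t + 2 * int k + int d)" using inWbar_of_nat[OF b] by simp
    then show False using not_inWbar_window[OF r, of d] \<open>d < w\<close> w_def by simp
  next
    assume "int t = 3 * int (t div 3) + 1"
    then have "walk b t + int k + int d = int b + int (t div 3 + 1) * (3 * int k)"
      by (simp add: walk_def d_int algebra_simps)
    then have "inWbar (walk b t + int k + int d)" using inWbar_of_nat[OF b] by simp
    then show False using not_inWbar_below_omega[OF r, of d] \<open>d < w\<close> w_def by simp
  qed
qed

lemma omega_sum_no_overshoot_mod3_2:
  assumes a: "a \<in> Wbar k W" and b_def: "b = rseq k W a 1"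
    and below: "omega_sum b t < k" and t: "t mod 3 = 2"
  shows "omega_sum b (Suc t) \<le> k"
proof (rule ccontr)
  define w where "w = omega k W (rseq k W b t)"
  define wa where "wa = omega k W a"
  define d where "d = k - omega_sum b t"
  assume "\<not> omega_sum b (Suc t) \<le> k"
  then have "d < w" using below unfolding d_def w_def omega_sum_Suc by simp
  have d_int: "int d = int k - int (omega_sum b t)" using below d_def by simp
  have b: "b \<in> Wbar k W" using rseq_walk[OF a, of 1] b_def by simp
  have r: "rseq k W b t \<in> Wbar k W"
    "int (rseq k W b t) mod (3 * int k) = walk b t mod (3 * int k)"
    using rseq_walk[OF b] by auto
  have b_mod: "int b mod (3 * int k) = (int a + int k + int wa) mod (3 * int k)"
    unfolding b_def wa_def by (simp add: of_nat_mod)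
  have t_int: "int t = 3 * int (t div 3) + 2" using t by presburger
  show False
  proof (cases "d < wa")
    case True
    define j where "j = wa - d"
    have "inWbar (walk b t)" using inWbar_walk[OF b] .
    moreover have "walk b t = int b - int d + int (t div 3 + 1) * (3 * int k)"
      by (simp add: walk_def d_int t_int algebra_simps)
    ultimately have "inWbar (int b - int d)" by simp
    then have "inWbar (int a + int k + int wa - int d)"
      using inWbar_add_cong[OF b_mod, of "- int d"] by simp
    moreover have "int a + int k + int wa - int d = int a + int k + int j"
      using True j_def by simp
    moreover have "j < wa" using True below d_def j_def by simp
    ultimately show False using not_inWbar_below_omega[OF a refl, of j] wa_def by metis
  next
    case False
    define j where "j = d - wa"
    define u where "u = int (t + 3) * int k - int wa"
    have "walk b t + 2 * int k + int j = int b + u"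
      using False by (simp add: walk_def d_int j_def u_def algebra_simps)
    moreover have "inWbar (int b + u)"
    proof -
      have "int a + int k + int wa + u = int a + int (t div 3 + 2) * (3 * int k)"
        by (simp add: u_def t_int algebra_simps)
      then have "inWbar (int a + int k + int wa + u)" using inWbar_of_nat[OF a] inWbar_add_period by metis
      then show ?thesis using inWbar_add_cong[OF b_mod] by simp
    qed
    moreover have "j \<le> w" using \<open>d < w\<close> j_def by simp
    ultimately show False using not_inWbar_window[OF r, of j] w_def by metis
  qed
qed

lemma omega_sum_hits_k:
  assumes a: "a \<in> Wbar k W"
  shows "\<exists>T. omega_sum (rseq k W a 1) T = k"
proof -
  define b where "b = rseq k W a 1"
  have b: "b \<in> Wbar k W" using rseq_walk[OF a, of 1] b_def by simp
  have "\<exists>T. omega_sum b T = k"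
  proof (rule nat_seq_no_jump_hits)
    show "omega_sum b 0 \<le> k" by (simp add: omega_sum_def)
    show "omega_sum b (Suc t) \<le> k" if "omega_sum b t < k" for t
      using omega_sum_no_overshoot_mod3_not2[OF b that] omega_sum_no_overshoot_mod3_2[OF a b_def that]
      by blast
    show "k \<le> omega_sum b k" using omega_sum_ge[OF b] .
  qed
  then show ?thesis unfolding b_def .
qed

lemma hitting_time_mod3:
  assumes b: "b \<in> Wbar k W" and hit: "omega_sum b T = k"
  shows "T mod 3 = 2"
proof -
  have walk_T: "inWbar (int b + int (T + 1) * int k)"
    using inWbar_walk[OF b, of T] hit by (simp add: walk_def algebra_simps)
  have b_in: "inWbar (int b)" using inWbar_of_nat[OF b] .
  define q where "q = T div 3"
  have "T = 3 * q \<or> T = 3 * q + 1 \<or> T mod 3 = 2" unfolding q_def by presburger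
  then show ?thesis
  proof (elim disjE)
    assume "T = 3 * q"
    then have "int b + int (T + 1) * int k = int b + int k + int q * (3 * int k)"
      by (simp add: algebra_simps)
    then have "inWbar (int b + int k)" using walk_T by (metis inWbar_add_period)
    then show ?thesis using inWbar_not_add_k[OF b_in] by blast
  next
    assume "T = 3 * q + 1"
    then have "int b + int (T + 1) * int k = int b - int k + int (q + 1) * (3 * int k)"
      by (simp add: algebra_simps)
    then have "inWbar (int b - int k)" using walk_T by (metis inWbar_add_period)
    then show ?thesis using inWbar_not_diff_k[OF b_in] by blast
  qed
qed

lemma omega_sum_mono: "m \<le> n \<Longrightarrow> omega_sum i m \<le> omega_sum i n"
  unfolding omega_sum_def by (rule sum_mono2) auto

lemma pidx_eq_hitting_time:
  assumes i: "i \<in> Wbar k W" and hit: "omega_sum i T = k"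
  shows "pidx k W i = T - 1"
  unfolding pidx_def omega_sum_def [symmetric]
proof (rule Greatest_equality)
  have "omega_sum i 0 = 0" by (simp add: omega_sum_def)
  then have "T \<noteq> 0" using hit k_pos by (metis less_irrefl)
  then show "omega_sum i (T - 1) \<le> k - 1"
    using omega_sum_less_Suc[OF i, of "T - 1"] hit by simp
next
  fix y
  assume y: "omega_sum i y \<le> k - 1"
  show "y \<le> T - 1"
  proof (rule ccontr)
    assume "\<not> y \<le> T - 1"
    then have "k \<le> omega_sum i y" using omega_sum_mono[of T y i] hit by simp
    then show False using y k_pos by simp
  qed
qed

theorem pidx_mod3_eq_1:
  assumes "Wbar k W \<noteq> {}"
  shows "\<exists>i\<in>Wbar k W. pidx k W i mod 3 = 1"
proof -
  obtain a where a: "a \<in> Wbar k W" using assms by blast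
  define b where "b = rseq k W a 1"
  have b: "b \<in> Wbar k W" using rseq_walk[OF a, of 1] b_def by simp
  obtain T where hit: "omega_sum b T = k" using omega_sum_hits_k[OF a] b_def by blast
  have "T mod 3 = 2" using hitting_time_mod3[OF b hit] .
  then have "T - 1 = 3 * (T div 3) + 1" using div_mult_mod_eq[of T 3] by linarith
  then have "pidx k W b mod 3 = 1" using pidx_eq_hitting_time[OF b hit] by simp
  then show ?thesis using b by blast
qed

end

theorem mainTheorem10:
  fixes k :: nat and W :: "nat set"
  assumes "k \<ge> 2"
    and "W \<subseteq> {..<3*k}"
    and "\<forall>i<3*k. card (xset k i \<inter> W) \<ge> 2"
    and "\<forall>i<3*k. card (Cblk k i \<inter> Wbar k W) \<ge> 2"
    and "\<forall>i\<in>Wbar k W. cint (3*k) (i + 2*k) (i + 2*k + omega k W i) \<subseteq> W"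
  shows "\<exists>i\<in>Wbar k W. pidx k W i mod 3 = 1"
proof -
  interpret admissible k W using assms by unfold_locales auto
  have "card (Cblk k 0 \<inter> Wbar k W) \<ge> 2" using assms(1,4) by simp
  then have "Wbar k W \<noteq> {}" by (metis card.empty inf_bot_right not_numeral_le_zero)
  then show ?thesis by (rule pidx_mod3_eq_1)
qed

end
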